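(* Let $\mathrm A$ be a nontrivial system of Bilocal Classical Theory (BCT) and $\rho=\sum_ip_i|i)_{\mathrm A}$ a deterministic state. For every $N$ and every channel $\mathcal C\in\mathsf{Tr}_1(\mathrm A^{\boxtimes N}\to\mathrm A^{\boxtimes N})$ define \[ \tilde D(\rho^{\boxtimes N},\mathcal C)=\sum_{\mathbf i,\mathbf s}\frac{1}{2^{N-1}}p_{\mathbf i}\,\big\|\big((\mathcal C-\mathcal I_{\mathrm A^{\boxtimes N}})\boxtimes\mathcal I_{\mathrm A^{\boxtimes N}}\big)|(\mathbf i_{\mathbf s}\mathbf i_{\mathbf s})_+)_{\mathrm A^{\boxtimes N}\mathrm A^{\boxtimes N}}\big\|_{\rm op}, \] with $p_{\mathbf i}=p_{i_1}\cdots p_{i_N}$, and let $\tilde I(\rho)$ be defined exactly as the information content $I(\rho)$ but with $D(\rho^{\boxtimes N},\mathcal D\mathcal E)$ replaced by $\tilde D(\rho^{\boxtimes N},\mathcal D\mathcal E)$ in the definition of compression schemes. Then $I(\rho)=\tilde I(\rho)$.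
   Context: BCT is an operational probabilistic theory with the following structure. Systems: a trivial system $\mathrm I$ and, for every integer $D>1$, exactly one system of size $D$. For a nontrivial system $\mathrm A$ of size $D_{\mathrm A}$, every state is a nonnegative combination $\sum_ip_i|i)_{\mathrm A}$ of the $D_{\mathrm A}$ pure states, which are the vertices of the simplex of deterministic states and are jointly perfectly discriminable; each system has a unique deterministic effect $e_{\mathrm A}$ with $(e_{\mathrm A}|i)=1$. For nontrivial $\mathrm A,\mathrm B$, the composite $\mathrm{AB}$ has size $2D_{\mathrm A}D_{\mathrm B}$ and pure states $|(ij)_s)_{\mathrm{AB}}$, $s\in\{+,-\}$, with $|i)_{\mathrm A}\boxtimes|j)_{\mathrm B}=\tfrac12\sum_{s=\pm}|(ij)_s)_{\mathrm{AB}}$ and $((ij)_{s_1}k)_{s_2}=(i(jk)_{s_1s_2})_{s_1}$. Transformations act linearly; channels $\mathcal C\in\mathsf{Tr}_1(\mathrm E\to\mathrm F)$ are exactly those for which for each $j$ there is a probability distribution $\{\lambda^{(j)}_{m\tau}\}$ over $(m,\tau)\in\{1,\dots,D_{\mathrm F}\}\times\{\pm\}$ with $(\mathcal I_{\mathrm A}\boxtimes\mathcal C)|(ij)_s)_{\mathrm{AE}}=\sum_{m,\tau}\lambda^{(j)}_{m\tau}|(im)_{\tau s})_{\mathrm{AF}}$ for every system $\mathrm A$. The system $\mathrm A^{\boxtimes N}=(\cdots((\mathrm A_1\mathrm A_2)\mathrm A_3)\cdots)\mathrm A_N$ (copies of $\mathrm A$) has pure states $|\mathbf i_{\mathbf s})$,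 $\mathbf i\in\{1,\dots,D_{\mathrm A}\}^N$, $\mathbf s\in\{\pm\}^{N-1}$, and $\rho^{\boxtimes N}=\sum_{\mathbf i,\mathbf s}p_{\mathbf i}2^{-(N-1)}|\mathbf i_{\mathbf s})$; $|(\mathbf i_{\mathbf s}\mathbf i_{\mathbf s})_+)$ is the pure state of $\mathrm A^{\boxtimes N}\mathrm A^{\boxtimes N}$ with both component labels $\mathbf i_{\mathbf s}$ and sign $+$. The bibit $\mathrm B$ is the system of size 2. Information content: a dilation of a state $\sigma$ of $\mathrm X$ is a state $\Psi$ of $\mathrm{XE}$ with $(\mathcal I_{\mathrm X}\boxtimes e_{\mathrm E})\Psi=\sigma$; a refinement of $\Psi$ is a finite collection of states from a common preparation test summing to $\Psi$. The operational norm is $\|\delta\|_{\rm op}=\sup_{\{a_0,a_1\}}(a_0-a_1|\delta)$ over binary observation tests (in BCT, the $\ell^1$-norm of the coefficients of $\delta$ in the pure-state basis). $D(\rho^{\boxtimes N},\mathcal C)=\sup_\Psi\sup_{\{\Gamma_i\}}\sum_i\|(\mathcal C\boxtimes\mathcal I_{\mathrm E})\Gamma_i-\Gamma_i\|_{\rm op}$ over dilations $\Psi$ of $\rho^{\boxtimes N}$ and refinements $\{\Gamma_i\}$ of $\Psi$. With $E_{N,M,\varepsilon}(\rho)$ the set of channel pairs $\mathcal E\in\mathsf{Tr}_1(\mathrm A^{\boxtimes N}\to\mathrm B^{\boxtimes M})$, $\mathcal D\in\mathsf{Tr}_1(\mathrm B^{\boxtimes M}\to\mathrm A^{\boxtimes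 N})$ with $D(\rho^{\boxtimes N},\mathcal D\mathcal E)<\varepsilon$, set $R_{N,\varepsilon}(\rho)=\min\{M:E_{N,M,\varepsilon}(\rho)\ne\emptyset\}/N$ and $I(\rho)=\lim_{\varepsilon\to0}\limsup_{N\to\infty}R_{N,\varepsilon}(\rho)$. *)

theory Defs
  imports "HOL-Analysis.Analysis"
begin

text \<open>Signs of BCT are encoded as booleans: True is +, False is -.
  The product of signs s1 s2 is sgnmul s1 s2.\<close>
definition sgnmul :: "bool \<Rightarrow> bool \<Rightarrow> bool" where
  "sgnmul a b = (a = b)"

text \<open>A system is represented by the finite set of labels of its pure states.
  A channel from a system with labels L1 to a system with labels L2 is represented by
  its (unique) family of distributions lam j (m,tau), j in L1, (m,tau) in L2 x signs,
  acting as (I_A boxtimes C)|(i j)_s) = sum lam j (m,tau) |(i m)_(tau s)).\<close>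
definition is_channel :: "'a set \<Rightarrow> 'b set \<Rightarrow> ('a \<Rightarrow> 'b \<times> bool \<Rightarrow> real) \<Rightarrow> bool" where
  "is_channel L1 L2 lam \<longleftrightarrow>
     (\<forall>j\<in>L1. (\<forall>m \<tau>. lam j (m, \<tau>) \<ge> 0) \<and> (\<forall>m \<tau>. m \<notin> L2 \<longrightarrow> lam j (m, \<tau>) = 0)
        \<and> (\<Sum>m\<tau>\<in>L2 \<times> UNIV. lam j m\<tau>) = 1)"

definition chan_comp :: "'b set \<Rightarrow> ('b \<Rightarrow> 'c \<times> bool \<Rightarrow> real) \<Rightarrow> ('a \<Rightarrow> 'b \<times> bool \<Rightarrow> real)
    \<Rightarrow> ('a \<Rightarrow> 'c \<times> bool \<Rightarrow> real)" where
  "chan_comp LB lamD lamE = (\<lambda>j (k, \<sigma>). \<Sum>m\<in>LB. \<Sum>\<tau>\<in>UNIV. lamE j (m, \<tau>) * lamD m (k, sgnmul \<sigma> \<tau>))"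

text \<open>Action of C boxtimes I_E on a vector of the composite XE, whose pure states are labelled
  (x, e, s): (C boxtimes I_E)|(x e)_s) = sum lam x (m,tau) |(m e)_(tau s)).\<close>
definition apply_left :: "'x set \<Rightarrow> ('x \<Rightarrow> 'x \<times> bool \<Rightarrow> real) \<Rightarrow> ('x \<times> 'e \<times> bool \<Rightarrow> real)
    \<Rightarrow> ('x \<times> 'e \<times> bool \<Rightarrow> real)" where
  "apply_left LX lam v = (\<lambda>(m, e, s'). \<Sum>x\<in>LX. \<Sum>\<tau>\<in>UNIV. lam x (m, \<tau>) * v (x, e, sgnmul \<tau> s'))"

text \<open>Action of C on a vector of X itself (composite with the trivial system).\<close>
definition apply_triv :: "'x set \<Rightarrow> ('x \<Rightarrow> 'x \<times> bool \<Rightarrow> real) \<Rightarrow> ('x \<Rightarrow> real) \<Rightarrow> ('x \<Rightarrow> real)" where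
  "apply_triv LX lam v = (\<lambda>m. \<Sum>x\<in>LX. \<Sum>\<tau>\<in>UNIV. lam x (m, \<tau>) * v x)"

text \<open>Operational norm in BCT: l1 norm of the coefficients in the pure-state basis.\<close>
definition op_norm :: "'l set \<Rightarrow> ('l \<Rightarrow> real) \<Rightarrow> real" where
  "op_norm L v = (\<Sum>l\<in>L. \<bar>v l\<bar>)"

definition is_state :: "'l set \<Rightarrow> ('l \<Rightarrow> real) \<Rightarrow> bool" where
  "is_state L v \<longleftrightarrow> (\<forall>l. v l \<ge> 0) \<and> (\<forall>l. l \<notin> L \<longrightarrow> v l = 0)"

text \<open>Values sum_i ||(C boxtimes I_E) Gamma_i - Gamma_i||_op over all dilations Psi of sigma
  (ancilla E trivial, or of size d > 1 with pure states labelled 1..d) and refinements.\<close>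
definition dist_vals :: "('x \<Rightarrow> real) \<Rightarrow> 'x set \<Rightarrow> ('x \<Rightarrow> 'x \<times> bool \<Rightarrow> real) \<Rightarrow> real set" where
  "dist_vals \<sigma> LX lam =
     {(\<Sum>\<Gamma>\<leftarrow>\<Gamma>s. op_norm LX (\<lambda>x. apply_triv LX lam \<Gamma> x - \<Gamma> x)) | \<Gamma>s.
         (\<forall>\<Gamma>\<in>set \<Gamma>s. is_state LX \<Gamma>) \<and> (\<forall>x. (\<Sum>\<Gamma>\<leftarrow>\<Gamma>s. \<Gamma> x) = \<sigma> x)}
   \<union> {(\<Sum>\<Gamma>\<leftarrow>\<Gamma>s. op_norm (LX \<times> {1..d} \<times> UNIV) (\<lambda>l. apply_left LX lam \<Gamma> l - \<Gamma> l)) | d \<Psi> \<Gamma>s.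
         (d::nat) > 1 \<and> is_state (LX \<times> {1..d} \<times> UNIV) \<Psi>
         \<and> (\<forall>x\<in>LX. (\<Sum>(e, s)\<in>{1..d} \<times> UNIV. \<Psi> (x, e, s)) = \<sigma> x)
         \<and> (\<forall>\<Gamma>\<in>set \<Gamma>s. is_state (LX \<times> {1..d} \<times> UNIV) \<Gamma>)
         \<and> (\<forall>l. (\<Sum>\<Gamma>\<leftarrow>\<Gamma>s. \<Gamma> l) = \<Psi> l)}"

definition dist_op :: "('x \<Rightarrow> real) \<Rightarrow> 'x set \<Rightarrow> ('x \<Rightarrow> 'x \<times> bool \<Rightarrow> real) \<Rightarrow> real" where
  "dist_op \<sigma> LX lam = Sup (dist_vals \<sigma> LX lam)"

definition dist_tilde :: "('x \<Rightarrow> real) \<Rightarrow> 'x set \<Rightarrow> ('x \<Rightarrow> 'x \<times> bool \<Rightarrow> real) \<Rightarrow> real" where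
  "dist_tilde \<sigma> LX lam =
     (\<Sum>x\<in>LX. \<sigma> x * op_norm (LX \<times> LX \<times> UNIV)
        (\<lambda>l. apply_left LX lam (\<lambda>l'. if l' = (x, x, True) then 1 else 0) l
             - (if l = (x, x, True) then 1 else 0)))"

text \<open>Pure-state labels (i, s) of A^{boxtimes N} for A of size D.\<close>
definition labels :: "nat \<Rightarrow> nat \<Rightarrow> (nat list \<times> bool list) set" where
  "labels D N = {(i, s). length i = N \<and> set i \<subseteq> {1..D} \<and> length s = N - 1}"

definition rhoN :: "(nat \<Rightarrow> real) \<Rightarrow> nat \<Rightarrow> nat \<Rightarrow> (nat list \<times> bool list \<Rightarrow> real)" where
  "rhoN p D N = (\<lambda>(i, s). if (i, s) \<in> labels D N then prod_list (map p i) / 2 ^ (N - 1) else 0)"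

type_synonym dist_fun =
  "(nat list \<times> bool list \<Rightarrow> real) \<Rightarrow> (nat list \<times> bool list) set
     \<Rightarrow> (nat list \<times> bool list \<Rightarrow> (nat list \<times> bool list) \<times> bool \<Rightarrow> real) \<Rightarrow> real"

text \<open>E_{N,M,eps}(rho) nonempty; the bibit B has size 2.\<close>
definition scheme_exists :: "dist_fun \<Rightarrow> nat \<Rightarrow> (nat \<Rightarrow> real) \<Rightarrow> nat \<Rightarrow> nat \<Rightarrow> real \<Rightarrow> bool" where
  "scheme_exists Dist D p N M \<epsilon> \<longleftrightarrow>
     (\<exists>lamE lamD. is_channel (labels D N) (labels 2 M) lamE \<and> is_channel (labels 2 M) (labels D N) lamD
        \<and> Dist (rhoN p D N) (labels D N) (chan_comp (labels 2 M) lamD lamE) < \<epsilon>)"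

definition rate :: "dist_fun \<Rightarrow> nat \<Rightarrow> (nat \<Rightarrow> real) \<Rightarrow> nat \<Rightarrow> real \<Rightarrow> real" where
  "rate Dist D p N \<epsilon> = real (Inf {M. M \<ge> 1 \<and> scheme_exists Dist D p N M \<epsilon>}) / real N"

definition info_content :: "dist_fun \<Rightarrow> nat \<Rightarrow> (nat \<Rightarrow> real) \<Rightarrow> ereal" where
  "info_content Dist D p = Lim (at_right 0) (\<lambda>\<epsilon>. limsup (\<lambda>N. ereal (rate Dist D p N \<epsilon>)))"

end

theory Submission
  imports Defs
begin

(* Both distances equal sum_x sigma(x) delta_C(x), where delta_C(x) is the l1 norm of the column of
   (C boxtimes I_E) - I belonging to a pure state |(x e)_s) of XE; this norm depends neither on e
   nor on s.  Hence, by the triangle inequality, every refinement of every dilation of sigma gives at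
   most sum_x sigma(x) delta_C(x), and splitting the dilation sum_x sigma(x) |(x 1)_+) into its pure
   components attains this bound, while the same point-mass computation evaluates D-tilde.  So
   D = D-tilde for every transformation C (no channel property is needed), the sets of compression
   schemes agree, and so do the rates and information contents. *)

(* delta_C(x) = || (C boxtimes I_E) |(x e)_+) - |(x e)_+) ||_op, for any ancilla E and label e *)
definition chan_defect :: "'x set \<Rightarrow> ('x \<Rightarrow> 'x \<times> bool \<Rightarrow> real) \<Rightarrow> 'x \<Rightarrow> real" where
  "chan_defect LX lam x = (\<Sum>m\<in>LX. \<Sum>\<tau>\<in>UNIV. \<bar>lam x (m, \<tau>) - (if m = x \<and> \<tau> then 1 else 0)\<bar>)"

lemma sum_abs_kernel_le:
  fixes K :: "'a \<Rightarrow> 'b \<Rightarrow> real"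
  assumes "finite L" and "\<And>l'. l' \<in> L' \<Longrightarrow> (\<Sum>l\<in>L. \<bar>K l l'\<bar>) \<le> c l'"
  shows "(\<Sum>l\<in>L. \<bar>\<Sum>l'\<in>L'. K l l' * v l'\<bar>) \<le> (\<Sum>l'\<in>L'. \<bar>v l'\<bar> * c l')"
proof -
  have "(\<Sum>l\<in>L. \<bar>\<Sum>l'\<in>L'. K l l' * v l'\<bar>) \<le> (\<Sum>l\<in>L. \<Sum>l'\<in>L'. \<bar>K l l'\<bar> * \<bar>v l'\<bar>)"
    by (intro sum_mono order.trans[OF sum_abs]) (simp add: abs_mult)
  also have "\<dots> = (\<Sum>l'\<in>L'. \<bar>v l'\<bar> * (\<Sum>l\<in>L. \<bar>K l l'\<bar>))"
    by (simp add: sum.swap[of _ L] sum_distrib_left mult.commute)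
  also have "\<dots> \<le> (\<Sum>l'\<in>L'. \<bar>v l'\<bar> * c l')"
    by (intro sum_mono mult_left_mono assms(2)) auto
  finally show ?thesis .
qed

(* Summing over the input sign s = tau s' instead of tau makes (C boxtimes I_E) - I, on each ancilla
   fibre, a matrix indexed by pairs (label, sign). *)
lemma apply_left_minus_self:
  assumes "finite LX" and "m \<in> LX"
  shows "apply_left LX lam v (m, e, s') - v (m, e, s') =
    (\<Sum>(x, s)\<in>LX \<times> UNIV. (lam x (m, sgnmul s s') - (if (x, s) = (m, s') then 1 else 0)) * v (x, e, s))"
  using assms
  by (cases s') (simp_all add: apply_left_def sgnmul_def sum.cartesian_product[symmetric] UNIV_bool
      sum.distrib left_diff_distrib sum_subtractf if_distrib[of "\<lambda>a. a * _"] cong: if_cong)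

lemma column_sum_apply_left:
  assumes "finite LX"
  shows "(\<Sum>(m, s')\<in>LX \<times> UNIV. \<bar>lam x (m, sgnmul s s') - (if (x, s) = (m, s') then 1 else 0)\<bar>)
    = chan_defect LX lam x"
  using assms
  by (cases s) (auto simp: chan_defect_def sgnmul_def sum.cartesian_product[symmetric] UNIV_bool
      sum.distrib intro!: sum.cong)

lemma apply_triv_minus_self:
  assumes "finite LX" and "m \<in> LX"
  shows "apply_triv LX lam v m - v m =
    (\<Sum>x\<in>LX. ((\<Sum>\<tau>\<in>UNIV. lam x (m, \<tau>)) - (if x = m then 1 else 0)) * v x)"
  using assms
  by (simp add: apply_triv_def left_diff_distrib sum_subtractf sum_distrib_right
      if_distrib[of "\<lambda>a. a * _"] cong: if_cong)

lemma column_sum_apply_triv_le: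
  assumes "finite LX"
  shows "(\<Sum>m\<in>LX. \<bar>(\<Sum>\<tau>\<in>UNIV. lam x (m, \<tau>)) - (if x = m then 1 else 0)\<bar>) \<le> chan_defect LX lam x"
  unfolding chan_defect_def
proof (intro sum_mono)
  fix m
  have "(\<Sum>\<tau>\<in>UNIV. lam x (m, \<tau>)) - (if x = m then 1 else 0)
      = (\<Sum>\<tau>\<in>UNIV. lam x (m, \<tau>) - (if m = x \<and> \<tau> then 1 else 0))"
    by (auto simp: UNIV_bool)
  then show "\<bar>(\<Sum>\<tau>\<in>UNIV. lam x (m, \<tau>)) - (if x = m then 1 else 0)\<bar>
      \<le> (\<Sum>\<tau>\<in>UNIV. \<bar>lam x (m, \<tau>) - (if m = x \<and> \<tau> then 1 else 0)\<bar>)"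
    by (simp only: sum_abs)
qed

lemma op_norm_fibrewise:
  "op_norm (LX \<times> E \<times> UNIV) f = (\<Sum>e\<in>E. \<Sum>(m, s)\<in>LX \<times> UNIV. \<bar>f (m, e, s)\<bar>)"
  by (simp add: op_norm_def sum.cartesian_product' sum.swap[of _ LX E])

lemma op_norm_apply_left_minus_self_le:
  assumes "finite LX"
  shows "op_norm (LX \<times> E \<times> UNIV) (\<lambda>l. apply_left LX lam \<Gamma> l - \<Gamma> l)
    \<le> (\<Sum>x\<in>LX. (\<Sum>e\<in>E. \<Sum>s\<in>UNIV. \<bar>\<Gamma> (x, e, s)\<bar>) * chan_defect LX lam x)"
proof -
  have "op_norm (LX \<times> E \<times> UNIV) (\<lambda>l. apply_left LX lam \<Gamma> l - \<Gamma> l)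
      = (\<Sum>e\<in>E. \<Sum>(m, s')\<in>LX \<times> UNIV. \<bar>\<Sum>(x, s)\<in>LX \<times> UNIV.
           (lam x (m, sgnmul s s') - (if (x, s) = (m, s') then 1 else 0)) * \<Gamma> (x, e, s)\<bar>)"
    unfolding op_norm_fibrewise
    using assms by (intro sum.cong refl) (clarsimp simp: apply_left_minus_self)
  also have "\<dots> \<le> (\<Sum>e\<in>E. \<Sum>(x, s)\<in>LX \<times> UNIV. \<bar>\<Gamma> (x, e, s)\<bar> * chan_defect LX lam x)"
  proof (rule sum_mono)
    fix e
    define K where "K = (\<lambda>(m, s') (x, s).
      lam x (m, sgnmul s s') - (if (x, s) = (m, s') then 1 else (0::real)))"
    have "(\<Sum>row\<in>LX \<times> UNIV. \<bar>\<Sum>col\<in>LX \<times> UNIV. K row col * \<Gamma> (fst col, e, snd col)\<bar>)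
        \<le> (\<Sum>col\<in>LX \<times> UNIV. \<bar>\<Gamma> (fst col, e, snd col)\<bar> * chan_defect LX lam (fst col))"
      using assms column_sum_apply_left[of LX lam]
      by (intro sum_abs_kernel_le) (auto simp: K_def split_def)
    then show "(\<Sum>(m, s')\<in>LX \<times> UNIV. \<bar>\<Sum>(x, s)\<in>LX \<times> UNIV.
           (lam x (m, sgnmul s s') - (if (x, s) = (m, s') then 1 else 0)) * \<Gamma> (x, e, s)\<bar>)
        \<le> (\<Sum>(x, s)\<in>LX \<times> UNIV. \<bar>\<Gamma> (x, e, s)\<bar> * chan_defect LX lam x)"
      by (simp add: K_def split_def)
  qed
  also have "\<dots> = (\<Sum>x\<in>LX. (\<Sum>e\<in>E. \<Sum>s\<in>UNIV. \<bar>\<Gamma> (x, e, s)\<bar>) * chan_defect LX lam x)"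
    by (simp add: sum.cartesian_product' sum.swap[of _ E] sum_distrib_right)
  finally show ?thesis .
qed

lemma op_norm_apply_triv_minus_self_le:
  assumes "finite LX"
  shows "op_norm LX (\<lambda>x. apply_triv LX lam \<Gamma> x - \<Gamma> x)
    \<le> (\<Sum>x\<in>LX. \<bar>\<Gamma> x\<bar> * chan_defect LX lam x)"
  using assms unfolding op_norm_def
  by (simp add: apply_triv_minus_self sum_abs_kernel_le column_sum_apply_triv_le cong: sum.cong)

lemma op_norm_apply_left_point_mass:
  assumes "finite LX" and "finite E" and "x \<in> LX" and "e0 \<in> E"
  shows "op_norm (LX \<times> E \<times> UNIV)
      (\<lambda>l. apply_left LX lam (\<lambda>l'. if l' = (x, e0, True) then a else 0) l
        - (if l = (x, e0, True) then a else 0))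
    = \<bar>a\<bar> * chan_defect LX lam x"
proof -
  define F where "F l = apply_left LX lam (\<lambda>l'. if l' = (x, e0, True) then a else 0) l
      - (if l = (x, e0, True) then a else 0)" for l
  define K where "K m s' = lam x (m, sgnmul True s') - (if (x, True) = (m, s') then 1 else 0)" for m s'
  have F: "F (m, e, s') = (if e = e0 then a * K m s' else 0)" if "m \<in> LX" for m e s'
    unfolding F_def
    using assms apply_left_minus_self[OF assms(1) that, of lam
        "\<lambda>l'. if l' = (x, e0, True) then a else 0" e s']
    by (simp add: sum.cartesian_product' UNIV_bool K_def if_distrib[of "\<lambda>a. _ * a"] cong: if_cong)
  have "op_norm (LX \<times> E \<times> UNIV) F
      = (\<Sum>e\<in>E. if e = e0 then \<bar>a\<bar> * (\<Sum>(m, s')\<in>LX \<times> UNIV. \<bar>K m s'\<bar>) else 0)"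
    unfolding op_norm_fibrewise
    by (intro sum.cong refl) (auto simp: F abs_mult sum_distrib_left intro!: sum.cong sum.neutral)
  also have "\<dots> = \<bar>a\<bar> * chan_defect LX lam x"
    using assms column_sum_apply_left[of LX lam x True] by (simp add: K_def)
  finally show ?thesis
    unfolding F_def .
qed

lemma dist_tilde_eq:
  assumes "finite LX"
  shows "dist_tilde \<sigma> LX lam = (\<Sum>x\<in>LX. \<sigma> x * chan_defect LX lam x)"
  unfolding dist_tilde_def
  using assms by (intro sum.cong refl) (simp add: op_norm_apply_left_point_mass)

lemma sum_list_sum_commute:
  "(\<Sum>\<Gamma>\<leftarrow>\<Gamma>s. \<Sum>x\<in>A. f x \<Gamma>) = (\<Sum>x\<in>A. \<Sum>\<Gamma>\<leftarrow>\<Gamma>s. f x \<Gamma>)"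
  by (induction \<Gamma>s) (simp_all add: sum.distrib)

lemma dist_vals_le:
  assumes "finite LX" and "v \<in> dist_vals \<sigma> LX lam"
  shows "v \<le> (\<Sum>x\<in>LX. \<sigma> x * chan_defect LX lam x)"
  using assms(2) unfolding dist_vals_def
proof (elim UnE CollectE exE conjE)
  fix \<Gamma>s
  assume v: "v = (\<Sum>\<Gamma>\<leftarrow>\<Gamma>s. op_norm LX (\<lambda>x. apply_triv LX lam \<Gamma> x - \<Gamma> x))"
    and states: "\<forall>\<Gamma>\<in>set \<Gamma>s. is_state LX \<Gamma>" and refines: "\<forall>x. (\<Sum>\<Gamma>\<leftarrow>\<Gamma>s. \<Gamma> x) = \<sigma> x"
  have "v \<le> (\<Sum>\<Gamma>\<leftarrow>\<Gamma>s. \<Sum>x\<in>LX. \<Gamma> x * chan_defect LX lam x)"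
    unfolding v using states assms(1)
    by (intro sum_list_mono order.trans[OF op_norm_apply_triv_minus_self_le]) (auto simp: is_state_def)
  also have "\<dots> = (\<Sum>x\<in>LX. \<sigma> x * chan_defect LX lam x)"
    by (simp add: sum_list_sum_commute sum_list_mult_const refines)
  finally show ?thesis .
next
  fix d :: nat and \<Psi> \<Gamma>s
  assume v: "v = (\<Sum>\<Gamma>\<leftarrow>\<Gamma>s. op_norm (LX \<times> {1..d} \<times> UNIV) (\<lambda>l. apply_left LX lam \<Gamma> l - \<Gamma> l))"
    and dilation: "\<forall>x\<in>LX. (\<Sum>(e, s)\<in>{1..d} \<times> UNIV. \<Psi> (x, e, s)) = \<sigma> x"
    and states: "\<forall>\<Gamma>\<in>set \<Gamma>s. is_state (LX \<times> {1..d} \<times> UNIV) \<Gamma>"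
    and refines: "\<forall>l. (\<Sum>\<Gamma>\<leftarrow>\<Gamma>s. \<Gamma> l) = \<Psi> l"
  have "v \<le> (\<Sum>\<Gamma>\<leftarrow>\<Gamma>s. \<Sum>x\<in>LX. (\<Sum>e\<in>{1..d}. \<Sum>s\<in>UNIV. \<Gamma> (x, e, s)) * chan_defect LX lam x)"
    unfolding v using states assms(1)
    by (intro sum_list_mono order.trans[OF op_norm_apply_left_minus_self_le]) (auto simp: is_state_def)
  also have "\<dots> = (\<Sum>x\<in>LX. (\<Sum>(e, s)\<in>{1..d} \<times> UNIV. \<Psi> (x, e, s)) * chan_defect LX lam x)"
    by (simp add: sum_list_sum_commute sum_list_mult_const sum_list_addf[symmetric] refines
        sum.cartesian_product')
  also have "\<dots> = (\<Sum>x\<in>LX. \<sigma> x * chan_defect LX lam x)"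
    using dilation by simp
  finally show ?thesis .
qed

lemma dist_vals_attained:
  assumes "finite LX" and nonneg: "\<forall>x\<in>LX. \<sigma> x \<ge> 0"
  shows "(\<Sum>x\<in>LX. \<sigma> x * chan_defect LX lam x) \<in> dist_vals \<sigma> LX lam"
proof -
  obtain xs where xs: "set xs = LX" "distinct xs"
    using finite_distinct_list[OF assms(1)] by blast
  define \<Gamma> where "\<Gamma> x = (\<lambda>l. if l = (x, 1::nat, True) then \<sigma> x else 0)" for x
  define \<Psi> where "\<Psi> = (\<lambda>(x, e, s). if x \<in> LX \<and> e = (1::nat) \<and> s then \<sigma> x else 0)"
  have "(\<Sum>\<Gamma>'\<leftarrow>map \<Gamma> xs. op_norm (LX \<times> {1..2} \<times> UNIV) (\<lambda>l. apply_left LX lam \<Gamma>' l - \<Gamma>' l))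
      = (\<Sum>x\<in>LX. \<sigma> x * chan_defect LX lam x)"
    using xs assms(1) nonneg unfolding \<Gamma>_def
    by (auto simp: sum_list_distinct_conv_sum_set op_norm_apply_left_point_mass comp_def
        intro!: sum.cong)
  moreover have "is_state (LX \<times> {1..2} \<times> UNIV) \<Psi>"
    using nonneg unfolding is_state_def \<Psi>_def by auto
  moreover have "\<forall>x\<in>LX. (\<Sum>(e, s)\<in>{1..2::nat} \<times> UNIV. \<Psi> (x, e, s)) = \<sigma> x"
    by (simp add: \<Psi>_def sum.cartesian_product' UNIV_bool)
  moreover have "\<forall>\<Gamma>'\<in>set (map \<Gamma> xs). is_state (LX \<times> {1..2} \<times> UNIV) \<Gamma>'"
    using nonneg xs unfolding \<Gamma>_def is_state_def by auto
  moreover have "\<forall>l. (\<Sum>\<Gamma>'\<leftarrow>map \<Gamma> xs. \<Gamma>' l) = \<Psi> l"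
    using xs assms(1)
    by (auto simp: \<Psi>_def \<Gamma>_def sum_list_distinct_conv_sum_set comp_def intro: sum.neutral)
  ultimately show ?thesis
    unfolding dist_vals_def
    by (intro UnI2 CollectI exI[of _ 2] exI[of _ \<Psi>] exI[of _ "map \<Gamma> xs"]) auto
qed

lemma dist_op_eq_dist_tilde:
  assumes "finite LX" and "\<forall>x\<in>LX. \<sigma> x \<ge> 0"
  shows "dist_op \<sigma> LX lam = dist_tilde \<sigma> LX lam"
  unfolding dist_op_def dist_tilde_eq[OF assms(1)]
  using assms dist_vals_attained dist_vals_le by (intro cSup_eq_maximum) auto

lemma finite_labels: "finite (labels D N)"
proof (rule finite_subset)
  show "labels D N
    \<subseteq> {i. set i \<subseteq> {1..D} \<and> length i = N} \<times> {s. set s \<subseteq> UNIV \<and> length s = N - 1}"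
    unfolding labels_def by auto
qed (intro finite_cartesian_product finite_lists_length_eq; simp)

lemma rhoN_nonneg:
  assumes "\<forall>i\<in>{1..D}. p i \<ge> 0"
  shows "\<forall>x\<in>labels D N. rhoN p D N x \<ge> 0"
  using assms unfolding rhoN_def labels_def
  by (auto intro!: divide_nonneg_pos prod_list_nonneg simp: subset_eq)

theorem proposition2:
  fixes DA :: nat and p :: "nat \<Rightarrow> real"
  assumes "DA > 1"
    and "\<forall>i\<in>{1..DA}. p i \<ge> 0"
    and "(\<Sum>i=1..DA. p i) = 1"
  shows "info_content dist_op DA p = info_content dist_tilde DA p"
proof -
  have "scheme_exists dist_op DA p = scheme_exists dist_tilde DA p"
    unfolding scheme_exists_def
    using dist_op_eq_dist_tilde[OF finite_labels rhoN_nonneg[OF assms(2)]] by (intro ext) simp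
  then show ?thesis
    unfolding info_content_def rate_def by simp
qed

end
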